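(* Let $\Omega$ be a finite $w$-regular graph. Let $A$ and $B$ be induced subgraphs of $\Omega$ with disjoint vertex sets such that $V(A)\cup V(B)=V(\Omega)$ and $|V(A)|\ge|V(B)|$. If $B$ contains an edge, then $A$ contains an edge. *)

theory Defs
  imports Main
begin

definition finite_simple_graph :: "'a set \<Rightarrow> ('a \<Rightarrow> 'a \<Rightarrow> bool) \<Rightarrow> bool" where
  "finite_simple_graph V E \<longleftrightarrow> finite V
     \<and> (\<forall>x y. E x y \<longrightarrow> x \<in> V \<and> y \<in> V)
     \<and> (\<forall>x y. E x y \<longrightarrow> E y x)
     \<and> (\<forall>x. \<not> E x x)"

definition degree :: "'a set \<Rightarrow> ('a \<Rightarrow> 'a \<Rightarrow> bool) \<Rightarrow> 'a \<Rightarrow> nat" where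
  "degree V E v = card {u \<in> V. E v u}"

definition regular :: "'a set \<Rightarrow> ('a \<Rightarrow> 'a \<Rightarrow> bool) \<Rightarrow> nat \<Rightarrow> bool" where
  "regular V E w \<longleftrightarrow> (\<forall>v \<in> V. degree V E v = w)"

definition induced_has_edge :: "('a \<Rightarrow> 'a \<Rightarrow> bool) \<Rightarrow> 'a set \<Rightarrow> bool" where
  "induced_has_edge E S \<longleftrightarrow> (\<exists>x \<in> S. \<exists>y \<in> S. E x y)"

end

theory Submission
  imports Defs
begin

text \<open>Suppose \<open>A\<close> were independent. Then each vertex of \<open>A\<close> sends all of its \<open>w\<close> edges
  into \<open>B\<close>, whereas each vertex of \<open>B\<close> sends at most \<open>w\<close> edges into \<open>A\<close>, and an endpoint of an
  edge inside \<open>B\<close> sends fewer. Counting the \<open>A\<close>--\<open>B\<close> edges from both sides gives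
  \<open>w |A| < w |B|\<close>, contradicting \<open>|A| \<ge> |B|\<close>.\<close>

lemma sum_card_neighbours_swap:
  assumes "finite A" "finite B" and sym: "\<And>x y. E x y \<Longrightarrow> E y x"
  shows "(\<Sum>a\<in>A. card {b\<in>B. E a b}) = (\<Sum>b\<in>B. card {a\<in>A. E b a})"
proof -
  have "(\<Sum>a\<in>A. card {b\<in>B. E a b}) = card (SIGMA a:A. {b\<in>B. E a b})"
    using assms by simp
  also have "\<dots> = card (SIGMA b:B. {a\<in>A. E b a})"
    by (rule bij_betw_same_card[of prod.swap]) (auto simp: bij_betw_def image_iff dest: sym)
  also have "\<dots> = (\<Sum>b\<in>B. card {a\<in>A. E b a})"
    using assms by simp
  finally show ?thesis .
qed

context
  fixes V :: "'a set" and E :: "'a \<Rightarrow> 'a \<Rightarrow> bool" and w :: nat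
  assumes graph: "finite_simple_graph V E" and reg: "regular V E w"
begin

lemma card_neighbours_within_le:
  assumes "v \<in> V"
  shows "card {u\<in>S. E v u} \<le> w"
proof -
  have "card {u\<in>S. E v u} \<le> card {u\<in>V. E v u}"
    using graph by (intro card_mono) (auto simp: finite_simple_graph_def)
  then show ?thesis
    using reg assms by (simp add: regular_def degree_def)
qed

lemma card_neighbours_within_less:
  assumes "v \<in> V" "E v u" "u \<notin> S"
  shows "card {u\<in>S. E v u} < w"
proof -
  have "{u\<in>S. E v u} \<subseteq> {u\<in>V. E v u}" "u \<in> {u\<in>V. E v u} - {u\<in>S. E v u}"
    using graph assms unfolding finite_simple_graph_def by blast+
  moreover have "finite {u\<in>V. E v u}"
    using graph by (simp add: finite_simple_graph_def)
  ultimately have "card {u\<in>S. E v u} < card {u\<in>V. E v u}"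
    by (intro psubset_card_mono) blast+
  then show ?thesis
    using reg assms by (simp add: regular_def degree_def)
qed

lemma card_neighbours_complement_of_independent:
  assumes "\<not> induced_has_edge E A" "A \<union> B = V" "a \<in> A"
  shows "card {u\<in>B. E a u} = w"
proof -
  have "{u\<in>B. E a u} = {u\<in>V. E a u}"
    using graph assms unfolding finite_simple_graph_def induced_has_edge_def by blast
  then show ?thesis
    using reg assms by (auto simp: regular_def degree_def)
qed

lemma card_independent_less_complement:
  assumes indep: "\<not> induced_has_edge E A" and partition: "A \<inter> B = {}" "A \<union> B = V"
    and edge_B: "induced_has_edge E B"
  shows "card A < card B"
proof -
  have fin: "finite A" "finite B"
    using graph partition by (auto simp: finite_simple_graph_def)
  obtain x y where xy: "x \<in> B" "y \<in> B" "E x y"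
    using edge_B by (auto simp: induced_has_edge_def)
  have "w * card A = (\<Sum>a\<in>A. card {b\<in>B. E a b})"
    using card_neighbours_complement_of_independent[OF indep partition(2)] by simp
  also have "\<dots> = (\<Sum>b\<in>B. card {a\<in>A. E b a})"
    using fin graph by (intro sum_card_neighbours_swap) (auto simp: finite_simple_graph_def)
  also have "\<dots> < (\<Sum>b\<in>B. w)"
  proof (rule sum_strict_mono_ex1)
    show "\<forall>b\<in>B. card {a\<in>A. E b a} \<le> w"
      using partition by (auto intro: card_neighbours_within_le)
    have "card {a\<in>A. E x a} < w"
      using xy partition by (intro card_neighbours_within_less[of x y]) auto
    then show "\<exists>b\<in>B. card {a\<in>A. E b a} < w"
      using xy by blast
  qed (use fin in simp)
  also have "\<dots> = w * card B" by simp
  finally show ?thesis by simp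
qed

end

theorem lemma4p7:
  fixes V A B :: "'a set" and E :: "'a \<Rightarrow> 'a \<Rightarrow> bool" and w :: nat
  assumes "finite_simple_graph V E"
    and "regular V E w"
    and "A \<subseteq> V" and "B \<subseteq> V"
    and "A \<inter> B = {}" and "A \<union> B = V"
    and "card A \<ge> card B"
    and "induced_has_edge E B"
  shows "induced_has_edge E A"
  using card_independent_less_complement[OF assms(1,2) _ assms(5,6,8)] assms(7) by fastforce

end
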